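(* Let $f=1$ and $n>0$. Then for every $c\in\left[\frac{1}{e^n}\left(\frac12+\frac n2+\frac{n^2}{12}\right),\frac12\right]$, the equation $c=\xi_{n,1}(\gamma)$ has a solution $\gamma\in[0,1]$.
   Context: Let $g(x,y)=1$ if $x>y$, $g(x,y)=1/2$ if $x=y$, and $g(x,y)=0$ if $x<y$. For $n>0$, $f\in\mathbb{N}$ and $\gamma\in[0,1]$, define $$\xi_{n,f}(\gamma)=\sum_{D=0}^\infty\sum_{V=0}^\infty \frac{(n\gamma)^D}{e^{n\gamma}D!}\frac{(n(1-\gamma))^V}{e^{n(1-\gamma)}V!}\Big[\sum_{h=0}^D\binom{D}{h}\Big(\tfrac{V+1}{V+1+f}\Big)^h\Big(\tfrac{f}{V+1+f}\Big)^{D-h}g(V+1+h,f+D-h)-\sum_{h=0}^{D+1}\binom{D+1}{h}\Big(\tfrac{V}{V+f}\Big)^h\Big(\tfrac{f}{V+f}\Big)^{D+1-h}g(V+h,f+D+1-h)\Big],$$ with the convention $0^0=1$. Interpretation: $\xi_{n,f}(\gamma)$ is the expected utility gain from voting rather than delegating for a well-behaving agent. The setting has Poisson$(n)$ well-behaving agents, each delegating with probability $\gamma$, and $f$ misbehaving voters who always vote. Delegated votes are assigned uniformly at random to the active voters. The equation $c=\xi_{n,f}(\gamma)$ is the equilibrium indifference condition for voting cost $c$. *)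

theory Defs
  imports "HOL-Analysis.Analysis"
begin

definition gcmp :: "nat \<Rightarrow> nat \<Rightarrow> real" where
  "gcmp x y = (if x > y then 1 else if x = y then 1/2 else 0)"

definition poisson_w :: "real \<Rightarrow> nat \<Rightarrow> real" where
  "poisson_w lam k = lam ^ k / (exp lam * fact k)"

definition xi_bracket :: "nat \<Rightarrow> nat \<Rightarrow> nat \<Rightarrow> real" where
  "xi_bracket f D V =
     (\<Sum>h=0..D. real (D choose h) * (real (V+1) / real (V+1+f)) ^ h
          * (real f / real (V+1+f)) ^ (D-h) * gcmp (V+1+h) (f+D-h))
   - (\<Sum>h=0..D+1. real ((D+1) choose h) * (real V / real (V+f)) ^ h
          * (real f / real (V+f)) ^ (D+1-h) * gcmp (V+h) (f+D+1-h))"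

definition xi :: "real \<Rightarrow> nat \<Rightarrow> real \<Rightarrow> real" where
  "xi n f \<gamma> = (\<Sum>D. \<Sum>V. poisson_w (n*\<gamma>) D * poisson_w (n*(1-\<gamma>)) V * xi_bracket f D V)"

end

theory Submission
  imports Defs
begin

(* Each bracket is the difference of two binomial averages of values in [0,1], so it lies in
   [-1,1] and the double series defining xi n f is dominated by (n^D/D!) (n^V/V!) uniformly
   in gamma; by the Weierstrass M-test xi n f is continuous on [0,1].
   At gamma = 0 only D = 0 survives, and for f = 1 the bracket vanishes once V >= 3, which
   gives xi n 1 0 = e^-n (1/2 + n/2 + n^2/12). At gamma = 1 only V = 0 survives, and each
   bracket equals 1/2 by the symmetry h <-> D - h, so xi n 1 1 = 1/2. The intermediate
   value theorem finishes the proof. *)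

lemma gcmp_bounds: "0 \<le> gcmp x y" "gcmp x y \<le> 1"
  by (simp_all add: gcmp_def)

lemma gcmp_swap: "gcmp x y + gcmp y x = 1"
  by (simp add: gcmp_def)

lemma binomial_weighted_sum_bounds:
  fixes p q :: real
  assumes "0 \<le> p" "0 \<le> q" and "\<And>h. 0 \<le> g h" "\<And>h. g h \<le> 1"
  shows "0 \<le> (\<Sum>h=0..D. real (D choose h) * p ^ h * q ^ (D-h) * g h)"
    and "(\<Sum>h=0..D. real (D choose h) * p ^ h * q ^ (D-h) * g h) \<le> (p + q) ^ D"
proof -
  show "0 \<le> (\<Sum>h=0..D. real (D choose h) * p ^ h * q ^ (D-h) * g h)"
    using assms by (intro sum_nonneg) simp
  have "(\<Sum>h=0..D. real (D choose h) * p ^ h * q ^ (D-h) * g h)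
      \<le> (\<Sum>h=0..D. real (D choose h) * p ^ h * q ^ (D-h))"
    using assms by (intro sum_mono mult_left_le) simp_all
  also have "\<dots> = (p + q) ^ D"
    by (simp add: binomial_ring atLeast0AtMost)
  finally show "(\<Sum>h=0..D. real (D choose h) * p ^ h * q ^ (D-h) * g h) \<le> (p + q) ^ D" .
qed

lemma fractions_of_sum_le_one: "real a / real (a + b) + real b / real (a + b) \<le> 1"
  by (cases "a + b = 0") (simp_all add: add_divide_distrib[symmetric])

lemma xi_bracket_abs_le: "\<bar>xi_bracket f D V\<bar> \<le> 1"
proof -
  have in_unit_interval: "0 \<le> (\<Sum>h=0..E. real (E choose h) * (real a / real (a + b)) ^ h
                  * (real b / real (a + b)) ^ (E-h) * g h)
           \<and> (\<Sum>h=0..E. real (E choose h) * (real a / real (a + b)) ^ h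
                  * (real b / real (a + b)) ^ (E-h) * g h) \<le> 1"
    if "\<And>h. 0 \<le> g h" "\<And>h. g h \<le> 1" for E a b and g :: "nat \<Rightarrow> real"
  proof -
    have "(real a / real (a + b) + real b / real (a + b)) ^ E \<le> 1"
      using fractions_of_sum_le_one by (intro power_le_one) auto
    then show ?thesis
      using binomial_weighted_sum_bounds[of "real a / real (a + b)" "real b / real (a + b)" g E] that
      by simp
  qed
  show ?thesis
    using in_unit_interval[of "\<lambda>h. gcmp (V+1+h) (f+D-h)" D "V+1" f]
      in_unit_interval[of "\<lambda>h. gcmp (V+h) (f+D+1-h)" "D+1" V f]
    unfolding xi_bracket_def abs_le_iff by (smt (verit) gcmp_bounds)
qed

lemma exp_series_sums: "(\<lambda>k. x ^ k / fact k) sums exp (x::real)"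
  using exp_converges[of x] by (simp add: field_simps)

lemma poisson_w_sums: "poisson_w l sums 1"
proof -
  have "poisson_w l = (\<lambda>k. l ^ k / fact k / exp l)"
    by (simp add: poisson_w_def fun_eq_iff mult.commute)
  then show ?thesis
    using sums_divide[OF exp_series_sums[of l], of "exp l"] by simp
qed

lemma poisson_w_zero: "poisson_w 0 k = (if k = 0 then 1 else 0)"
  by (simp add: poisson_w_def)

lemma poisson_w_bounds:
  assumes "0 \<le> l" "l \<le> m"
  shows "0 \<le> poisson_w l k" "poisson_w l k \<le> m ^ k / fact k"
proof -
  show "0 \<le> poisson_w l k"
    using assms by (simp add: poisson_w_def)
  have "l ^ k / (exp l * fact k) \<le> m ^ k / (1 * fact k)"
    using assms by (intro frac_le mult_right_mono power_mono) auto
  then show "poisson_w l k \<le> m ^ k / fact k"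
    by (simp add: poisson_w_def)
qed

lemma continuous_on_suminf:
  fixes f :: "nat \<Rightarrow> 'a::topological_space \<Rightarrow> 'b::banach"
  assumes "\<And>k. continuous_on S (f k)"
    and "\<And>k x. x \<in> S \<Longrightarrow> norm (f k x) \<le> M k" and "summable M"
  shows "continuous_on S (\<lambda>x. \<Sum>k. f k x)"
  by (rule uniform_limit_theorem[OF _ Weierstrass_m_test[OF assms(2,3)]])
    (use assms(1) in \<open>auto intro!: always_eventually continuous_on_sum\<close>)

lemma continuous_on_xi:
  assumes "n > 0"
  shows "continuous_on {0..1} (xi n f)"
proof -
  define T where "T D V \<gamma> = poisson_w (n*\<gamma>) D * poisson_w (n*(1-\<gamma>)) V * xi_bracket f D V"
    for D V \<gamma>
  have T_bound: "\<bar>T D V \<gamma>\<bar> \<le> n ^ D / fact D * (n ^ V / fact V)" if "\<gamma> \<in> {0..1}" for D V \<gamma>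
  proof -
    have "0 \<le> n * \<gamma>" "n * \<gamma> \<le> n" "0 \<le> n * (1-\<gamma>)" "n * (1-\<gamma>) \<le> n"
      using that assms by (auto intro: mult_left_le)
    then have "\<bar>T D V \<gamma>\<bar> \<le> n ^ D / fact D * (n ^ V / fact V) * 1"
      unfolding T_def abs_mult
      by (intro mult_mono xi_bracket_abs_le) (auto simp: poisson_w_bounds)
    then show ?thesis by simp
  qed
  have inner_bound: "\<bar>\<Sum>V. T D V \<gamma>\<bar> \<le> n ^ D / fact D * exp n" if "\<gamma> \<in> {0..1}" for D \<gamma>
  proof -
    have "norm (\<Sum>V. T D V \<gamma>) \<le> (\<Sum>V. n ^ D / fact D * (n ^ V / fact V))"
      using T_bound[OF that] exp_series_sums[of n]
      by (intro norm_suminf_le summable_mult) (auto simp: sums_iff)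
    also have "\<dots> = n ^ D / fact D * exp n"
      by (rule sums_unique[symmetric, OF sums_mult[OF exp_series_sums]])
    finally show ?thesis by simp
  qed
  have inner_continuous: "continuous_on {0..1} (\<lambda>\<gamma>. \<Sum>V. T D V \<gamma>)" for D
  proof (rule continuous_on_suminf[where M = "\<lambda>V. n ^ D / fact D * (n ^ V / fact V)"])
    show "continuous_on {0..1} (T D V)" for V
      unfolding T_def poisson_w_def by (intro continuous_intros) auto
    show "summable (\<lambda>V. n ^ D / fact D * (n ^ V / fact V))"
      by (intro summable_mult sums_summable[OF exp_series_sums])
  qed (use T_bound in simp)
  have "continuous_on {0..1} (\<lambda>\<gamma>. \<Sum>D. \<Sum>V. T D V \<gamma>)"
  proof (rule continuous_on_suminf[where M = "\<lambda>D. n ^ D / fact D * exp n"])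
    show "summable (\<lambda>D. n ^ D / fact D * exp n)"
      by (intro summable_mult2 sums_summable[OF exp_series_sums])
  qed (use inner_continuous inner_bound in simp_all)
  then show ?thesis
    by (simp add: xi_def T_def)
qed

lemma xi_at_zero: "xi n f 0 = (\<Sum>V. poisson_w n V * xi_bracket f 0 V)"
proof -
  have "(\<Sum>V. poisson_w 0 D * poisson_w n V * xi_bracket f D V)
      = (if D = 0 then \<Sum>V. poisson_w n V * xi_bracket f 0 V else 0)" for D
    by (simp add: poisson_w_zero)
  then have "xi n f 0 = (\<Sum>D. if D = 0 then \<Sum>V. poisson_w n V * xi_bracket f 0 V else 0)"
    unfolding xi_def by simp
  also have "\<dots> = (\<Sum>V. poisson_w n V * xi_bracket f 0 V)"
    by (subst suminf_finite[of "{0}"]) auto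
  finally show ?thesis .
qed

lemma xi_at_one: "xi n f 1 = (\<Sum>D. poisson_w n D * xi_bracket f D 0)"
proof -
  have "(\<Sum>V. poisson_w n D * poisson_w 0 V * xi_bracket f D V) = poisson_w n D * xi_bracket f D 0"
    for D by (subst suminf_finite[of "{0}"]) (auto simp: poisson_w_zero)
  then show ?thesis
    unfolding xi_def by simp
qed

lemma binomial_sum_gcmp: "(\<Sum>h=0..D. real (D choose h) * gcmp (1+h) (1+D-h)) = 2 ^ D / 2"
proof -
  let ?S = "\<Sum>h=0..D. real (D choose h) * gcmp (1+h) (1+D-h)"
  have reflected: "?S = (\<Sum>h=0..D. real (D choose h) * gcmp (1+D-h) (1+h))"
    by (subst sum.atLeastAtMost_rev[of _ 0 D, simplified])
      (auto intro!: sum.cong simp: binomial_symmetric[symmetric] Suc_diff_le)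
  have "?S + ?S = (\<Sum>h=0..D. real (D choose h) * (gcmp (1+h) (1+D-h) + gcmp (1+D-h) (1+h)))"
    by (subst (2) reflected) (simp add: sum.distrib[symmetric] algebra_simps)
  also have "\<dots> = 2 ^ D"
    by (simp add: gcmp_swap atLeast0AtMost flip: of_nat_sum choose_row_sum)
  finally show ?thesis by simp
qed

lemma xi_bracket_one_zero_voters: "xi_bracket 1 D 0 = 1/2"
proof -
  have "(\<Sum>h=0..D. real (D choose h) * (real (0+1) / real (0+1+1)) ^ h
        * (real 1 / real (0+1+1)) ^ (D-h) * gcmp (0+1+h) (1+D-h))
      = (\<Sum>h=0..D. real (D choose h) * gcmp (1+h) (1+D-h)) / 2 ^ D"
    unfolding sum_divide_distrib
  proof (rule sum.cong)
    fix h assume "h \<in> {0..D}"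
    then have "(1/2::real) ^ h * (1/2) ^ (D-h) = 1 / 2 ^ D"
      by (simp add: power_add[symmetric] power_one_over)
    then show "real (D choose h) * (real (0+1) / real (0+1+1)) ^ h
        * (real 1 / real (0+1+1)) ^ (D-h) * gcmp (0+1+h) (1+D-h)
      = real (D choose h) * gcmp (1+h) (1+D-h) / 2 ^ D"
      by (simp add: field_simps)
  qed simp
  also have "\<dots> = 1/2"
    unfolding binomial_sum_gcmp by simp
  finally have first: "(\<Sum>h=0..D. real (D choose h) * (real (0+1) / real (0+1+1)) ^ h
        * (real 1 / real (0+1+1)) ^ (D-h) * gcmp (0+1+h) (1+D-h)) = 1/2" .
  have second: "(\<Sum>h=0..D+1. real ((D+1) choose h) * (real 0 / real (0+1)) ^ h
        * (real 1 / real (0+1)) ^ (D+1-h) * gcmp (0+h) (1+D+1-h)) = 0"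
    by (intro sum.neutral) (auto simp: gcmp_def)
  show ?thesis
    unfolding xi_bracket_def first second by simp
qed

lemma xi_bracket_one_zero_delegators:
  "xi_bracket 1 0 V = (if V \<le> 1 then 1/2 else if V = 2 then 1/6 else 0)"
proof -
  have "xi_bracket 1 0 V = gcmp (V+1) 1 - (gcmp V 2 + V * gcmp (V+1) 1) / (V+1)"
    unfolding xi_bracket_def by (simp add: numeral_2_eq_2 add_divide_distrib add_ac)
  moreover have "V = 0 \<or> V = 1 \<or> V = 2 \<or> V \<ge> 3" by auto
  ultimately show ?thesis
    by (auto simp: gcmp_def)
qed

lemma xi_one_at_zero: "xi n 1 0 = (1/2 + n/2 + n^2/12) / exp n"
proof -
  have "xi n 1 0 = (\<Sum>V\<in>{0,1,2}. poisson_w n V * xi_bracket 1 0 V)"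
    unfolding xi_at_zero
  proof (rule suminf_finite)
    fix V :: nat assume "V \<notin> {0,1,2}"
    then show "poisson_w n V * xi_bracket 1 0 V = 0"
      by (simp only: xi_bracket_one_zero_delegators) simp
  qed simp
  also have "\<dots> = (1/2 + n/2 + n^2/12) / exp n"
    \<comment> \<open>the simplifier rewrites the argument \<open>1\<close> of \<open>xi_bracket\<close> to \<open>Suc 0\<close>\<close>
    by (simp add: xi_bracket_one_zero_delegators[simplified] poisson_w_def field_simps
        power2_eq_square)
  finally show ?thesis .
qed

lemma xi_one_at_one: "xi n 1 1 = 1/2"
  unfolding xi_at_one xi_bracket_one_zero_voters
  using sums_unique[OF sums_mult2[OF poisson_w_sums[of n], of "1/2"]] by simp

theorem proposition2:
  fixes n c :: real
  assumes "n > 0"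
    and "(1/2 + n/2 + n^2/12) / exp n \<le> c" and "c \<le> 1/2"
  shows "\<exists>\<gamma>\<in>{0..1}. c = xi n 1 \<gamma>"
proof -
  have "xi n 1 0 \<le> c" "c \<le> xi n 1 1"
    using assms(2,3) by (simp_all only: xi_one_at_zero xi_one_at_one)
  then obtain \<gamma> where "0 \<le> \<gamma>" "\<gamma> \<le> 1" "xi n 1 \<gamma> = c"
    using IVT'[OF _ _ _ continuous_on_xi[OF assms(1)]] by (metis zero_le_one)
  then show ?thesis by auto
qed

end
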